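(* Let $n\ge1$, $1\le k\le n$, and let $(I_2,I_1)$ be a $k\times k$ minor that is not reverse-admissible, with $\Gamma,\tilde\Gamma,\tilde I_1,\tilde I_2,\mathsf F$ as in the context. Then for every $\Gamma'\subset\{1,\dots,n\}\setminus(I_1\cup I_2)$ with $|\Gamma'|=|\tilde\Gamma|$, the PBW-degree of the minor $(\tilde I_2\cup\mathsf F\cup\Gamma',\ \tilde I_1\cup\mathsf F\cup\Gamma')$ is greater than or equal to the PBW-degree of $(I_2,I_1)$. In other words, each summand on the right hand side of the relation $X_{(I_2,I_1)}=\sum_{\Gamma'}(-1)^{|\Gamma'|}X_{(\tilde I_2\cup\mathsf F\cup\Gamma',\tilde I_1\cup\mathsf F\cup\Gamma')}$ has PBW-degree at least that of $X_{(I_2,I_1)}$.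
   Context: A $k\times k$ minor is a pair $(I_2,I_1)$ of subsets of $\{1,\dots,n\}$ with $|I_1|+|I_2|=k$. Put $\Gamma=I_1\cap I_2=\{\gamma_1<\dots<\gamma_t\}$, $\tilde I_1=I_1\setminus\Gamma$, $\tilde I_2=I_2\setminus\Gamma$. The minor is reverse-admissible if there is $T=\{\tau_1<\dots<\tau_t\}\subset\{1,\dots,n\}\setminus(I_1\cup I_2)$ with $\tau_i\le\gamma_i$ for all $i$. For a non-reverse-admissible minor: let $1\le h_0\le t$ be minimal such that there is a subset $\mathsf T\subset\{1,\dots,n\}\setminus(I_1\cup I_2)$ of size $t-h_0$ which is componentwise $\le(\gamma_{h_0+1},\dots,\gamma_t)$ (elements listed increasingly); choose such $\mathsf T_{h_0+1}=\{\lambda_{h_0+1}<\dots<\lambda_t\}$ maximal for the componentwise partial order; let $b\in\{h_0+1,\dots,t\}$ be maximal with $(\lambda_{h_0+1},\dots,\lambda_b)$ componentwise $\le(\gamma_{h_0},\dots,\gamma_{b-1})$, or $b=h_0$ if no such $b$ exists. Set $\tilde\Gamma=\{\gamma_{h_0},\dots,\gamma_b\}$ and $\mathsf F=\Gamma\setminus\tilde\Gamma$. The PBW-degree of a $k\times k$ minor $(I_2,I_1)$ is $\deg(I_2,I_1)=|I_2|+\#\{i\in I_1: i>k\}$; equivalently, it is the number of entries $>k$ of the increasing sequence in $\mathcal N=\{1<\dots<n<\bar n<\dots<\bar1\}$ ($\bar i=2n+1-i$) formed by $I_1\cup\{\bar i:i\in I_2\}$. In the coordinate ring of the complete symplectic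 flag variety, $X_{(I_2,I_1)}$ denotes the corresponding Plücker coordinate (up to a fixed sign convention). *)

theory Defs
  imports Main
begin

text \<open>Sets of positive integers are identified with their increasing enumerations
  (via sorted_list_of_set). Indices are 1-based: the i-th smallest element.\<close>

definition elt :: "nat set \<Rightarrow> nat \<Rightarrow> nat" where
  "elt A i = sorted_list_of_set A ! (i - 1)"

definition cle :: "nat set \<Rightarrow> nat set \<Rightarrow> bool" where
  "cle A B \<longleftrightarrow> finite A \<and> finite B \<and> card A = card B \<and>
     (\<forall>i<card A. sorted_list_of_set A ! i \<le> sorted_list_of_set B ! i)"

definition compl_set :: "nat \<Rightarrow> nat set \<Rightarrow> nat set \<Rightarrow> nat set" where
  "compl_set n I1 I2 = {1..n} - (I1 \<union> I2)"

definition reverse_admissible :: "nat \<Rightarrow> nat set \<Rightarrow> nat set \<Rightarrow> bool" where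
  "reverse_admissible n I1 I2 \<longleftrightarrow>
     (\<exists>T. T \<subseteq> compl_set n I1 I2 \<and> cle T (I1 \<inter> I2))"

text \<open>The set {gamma_(h+1), ..., gamma_t}.\<close>
definition gtail :: "nat set \<Rightarrow> nat set \<Rightarrow> nat \<Rightarrow> nat set" where
  "gtail I1 I2 h = set (drop h (sorted_list_of_set (I1 \<inter> I2)))"

definition h_ok :: "nat \<Rightarrow> nat set \<Rightarrow> nat set \<Rightarrow> nat \<Rightarrow> bool" where
  "h_ok n I1 I2 h \<longleftrightarrow> 1 \<le> h \<and> h \<le> card (I1 \<inter> I2) \<and>
     (\<exists>T. T \<subseteq> compl_set n I1 I2 \<and> cle T (gtail I1 I2 h))"

definition h0 :: "nat \<Rightarrow> nat set \<Rightarrow> nat set \<Rightarrow> nat" where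
  "h0 n I1 I2 = (LEAST h. h_ok n I1 I2 h)"

definition is_maxT :: "nat \<Rightarrow> nat set \<Rightarrow> nat set \<Rightarrow> nat set \<Rightarrow> bool" where
  "is_maxT n I1 I2 T \<longleftrightarrow>
     T \<subseteq> compl_set n I1 I2 \<and> cle T (gtail I1 I2 (h0 n I1 I2)) \<and>
     (\<forall>T'. T' \<subseteq> compl_set n I1 I2 \<and> cle T' (gtail I1 I2 (h0 n I1 I2)) \<and> cle T T'
        \<longrightarrow> T' = T)"

text \<open>lambda_j = j-th element of T where T is indexed by h0+1, ..., t.
  b_ok: (lambda_(h0+1),...,lambda_b) componentwise \<le> (gamma_h0,...,gamma_(b-1)).\<close>
definition b_ok :: "nat \<Rightarrow> nat set \<Rightarrow> nat set \<Rightarrow> nat set \<Rightarrow> nat \<Rightarrow> bool" where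
  "b_ok n I1 I2 T b \<longleftrightarrow>
     (\<forall>j\<in>{h0 n I1 I2 + 1..b}. elt T (j - h0 n I1 I2) \<le> elt (I1 \<inter> I2) (j - 1))"

definition bval :: "nat \<Rightarrow> nat set \<Rightarrow> nat set \<Rightarrow> nat set \<Rightarrow> nat" where
  "bval n I1 I2 T =
     (if \<exists>b\<in>{h0 n I1 I2 + 1..card (I1 \<inter> I2)}. b_ok n I1 I2 T b
      then (GREATEST b. b \<in> {h0 n I1 I2 + 1..card (I1 \<inter> I2)} \<and> b_ok n I1 I2 T b)
      else h0 n I1 I2)"

definition tGamma :: "nat \<Rightarrow> nat set \<Rightarrow> nat set \<Rightarrow> nat set \<Rightarrow> nat set" where
  "tGamma n I1 I2 T = elt (I1 \<inter> I2) ` {h0 n I1 I2..bval n I1 I2 T}"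

definition Fset :: "nat \<Rightarrow> nat set \<Rightarrow> nat set \<Rightarrow> nat set \<Rightarrow> nat set" where
  "Fset n I1 I2 T = (I1 \<inter> I2) - tGamma n I1 I2 T"

definition pbw_deg :: "nat set \<Rightarrow> nat set \<Rightarrow> nat" where
  "pbw_deg I2 I1 = card I2 + card {i \<in> I1. i > card I1 + card I2}"

end

theory Submission imports Defs begin

text \<open>By minimality of h0 no subset of the complement C lies componentwise below
  (gamma_h0, ..., gamma_t). Choosing the smallest elements of C greedily shows that this can
  only fail at a bottleneck: some gamma_j with j \<ge> h0 has at most j - h0 elements of C
  below it. Then b \<le> j, since otherwise lambda_(h0+1), ..., lambda_(j+1) would be j - h0 + 1
  elements of C below gamma_j. Counting {1, ..., gamma_j} inside C \<union> I1 \<union> I2 gives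
  gamma_j < k, so every element of tGamma is below k. Replacing tGamma by Gamma' keeps
  |I1| and |I2| and only removes entries \<le> k from I1, so no entry of I1 exceeding k is lost.
  Only T \<subseteq> C and T \<le> (gamma_(h0+1), ..., gamma_t) are used, not the maximality of T.\<close>

lemma sorted_list_of_set_nth_le_iff:
  fixes A :: "'a::linorder set"
  assumes "finite A" "i < card A"
  shows "sorted_list_of_set A ! i \<le> y \<longleftrightarrow> i < card {a\<in>A. a \<le> y}"
proof -
  let ?L = "sorted_list_of_set A"
  have len: "length ?L = card A" and sorted: "sorted ?L" and set: "set ?L = A"
    using assms(1) by auto
  show ?thesis
  proof
    assume le: "?L ! i \<le> y"
    have "set (take (Suc i) ?L) \<subseteq> {a\<in>A. a \<le> y}"
    proof
      fix a assume "a \<in> set (take (Suc i) ?L)"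
      then obtain p where p: "p \<le> i" "a = ?L ! p"
        using assms(2) len by (auto simp: in_set_conv_nth less_Suc_eq_le)
      have "?L ! p \<le> ?L ! i" using sorted p(1) assms(2) len by (intro sorted_nth_mono) auto
      moreover have "?L ! p \<in> A" using set p(1) assms(2) len by (metis le_less_trans nth_mem)
      ultimately show "a \<in> {a\<in>A. a \<le> y}" using p(2) le by simp
    qed
    then have "card (set (take (Suc i) ?L)) \<le> card {a\<in>A. a \<le> y}"
      using assms(1) by (intro card_mono) auto
    moreover have "card (set (take (Suc i) ?L)) = Suc i"
      using distinct_card[of "take (Suc i) ?L"] assms(2) len by simp
    ultimately show "i < card {a\<in>A. a \<le> y}" by simp
  next
    assume count: "i < card {a\<in>A. a \<le> y}"
    show "?L ! i \<le> y"
    proof (rule ccontr)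
      assume "\<not> ?L ! i \<le> y"
      then have above: "y < ?L ! i" by simp
      have "{a\<in>A. a \<le> y} \<subseteq> set (take i ?L)"
      proof
        fix a assume a: "a \<in> {a\<in>A. a \<le> y}"
        then have "a \<in> set ?L" using set by simp
        then obtain p where p: "p < length ?L" "a = ?L ! p" by (auto simp: in_set_conv_nth)
        have "p < i"
        proof (rule ccontr)
          assume "\<not> p < i"
          then have "?L ! i \<le> ?L ! p" using sorted p(1) by (intro sorted_nth_mono) auto
          then show False using a p above by auto
        qed
        then show "a \<in> set (take i ?L)" using p by (auto simp: in_set_conv_nth)
      qed
      then have "card {a\<in>A. a \<le> y} \<le> card (set (take i ?L))" by (intro card_mono) auto
      also have "\<dots> \<le> i" using card_length[of "take i ?L"] by simp
      finally show False using count by simp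
    qed
  qed
qed

lemma elt_le_iff:
  assumes "finite A" "1 \<le> j" "j \<le> card A"
  shows "elt A j \<le> y \<longleftrightarrow> j \<le> card {a\<in>A. a \<le> y}"
  using sorted_list_of_set_nth_le_iff[OF assms(1), of "j - 1" y] assms(2,3)
  by (auto simp: elt_def)

lemma elt_mem:
  assumes "finite A" "1 \<le> j" "j \<le> card A"
  shows "elt A j \<in> A"
  using assms nth_mem[of "j - 1" "sorted_list_of_set A"] by (simp add: elt_def)

lemma elt_image_subset:
  assumes "finite A" "1 \<le> a" "b \<le> j" "j \<le> card A"
  shows "elt A ` {a..b} \<subseteq> {z\<in>A. z \<le> elt A j}"
proof
  fix z assume "z \<in> elt A ` {a..b}"
  then obtain x where x: "a \<le> x" "x \<le> b" "z = elt A x" by auto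
  have "elt A x \<in> A" using x assms by (intro elt_mem) auto
  moreover have "elt A x \<le> elt A j"
    unfolding elt_def using x assms by (intro sorted_nth_mono) auto
  ultimately show "z \<in> {z\<in>A. z \<le> elt A j}" using x(3) by simp
qed

lemma exists_subset_cle_if_counts:
  assumes "finite B" "finite C"
    and counts: "\<forall>i<card B. i < card {c\<in>C. c \<le> sorted_list_of_set B ! i}"
  shows "\<exists>S\<subseteq>C. cle S B"
proof -
  let ?L = "sorted_list_of_set C"
  let ?S = "set (take (card B) ?L)"
  have "card B \<le> card C"
  proof (cases "card B = 0")
    case False
    then have "card B - 1 < card {c\<in>C. c \<le> sorted_list_of_set B ! (card B - 1)}"
      using counts by simp
    also have "\<dots> \<le> card C" using assms(2) by (intro card_mono) auto
    finally show ?thesis by simp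
  qed simp
  then have card_S: "card ?S = card B" using distinct_card[of "take (card B) ?L"] by simp
  have sorted_S: "sorted_list_of_set ?S = take (card B) ?L"
    by (rule sorted_list_of_set.idem_if_sorted_distinct) (auto simp: sorted_wrt_take)
  have "cle ?S B"
    unfolding cle_def sorted_S card_S
  proof (intro conjI allI impI)
    fix i assume i: "i < card B"
    have "i < card C" using i \<open>card B \<le> card C\<close> by simp
    then have "?L ! i \<le> sorted_list_of_set B ! i"
      using sorted_list_of_set_nth_le_iff[OF assms(2)] counts i by blast
    then show "take (card B) ?L ! i \<le> sorted_list_of_set B ! i" using i by simp
  qed (use assms(1) in auto)
  moreover have "?S \<subseteq> C" using assms(2) set_take_subset[of "card B" ?L] by simp
  ultimately show ?thesis by blast
qed

lemma sorted_list_of_set_gtail: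
  "sorted_list_of_set (gtail I1 I2 h) = drop h (sorted_list_of_set (I1 \<inter> I2))"
  unfolding gtail_def
  by (rule sorted_list_of_set.idem_if_sorted_distinct) (auto simp: sorted_wrt_drop)

lemma card_gtail: "card (gtail I1 I2 h) = card (I1 \<inter> I2) - h"
  unfolding gtail_def by (simp add: distinct_card)

lemma gtail_0: "finite (I1 \<inter> I2) \<Longrightarrow> gtail I1 I2 0 = I1 \<inter> I2"
  by (simp add: gtail_def)

lemma finite_compl_set: "finite (compl_set n I1 I2)"
  by (simp add: compl_set_def)

lemma reverse_admissible_if_Int_empty: "I1 \<inter> I2 = {} \<Longrightarrow> reverse_admissible n I1 I2"
  unfolding reverse_admissible_def by (auto simp: cle_def intro!: exI[of _ "{}"])

lemma h_ok_card_Int: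
  assumes "finite (I1 \<inter> I2)" "I1 \<inter> I2 \<noteq> {}"
  shows "h_ok n I1 I2 (card (I1 \<inter> I2))"
proof -
  have "gtail I1 I2 (card (I1 \<inter> I2)) = {}" using card_gtail
    by (metis card_0_eq diff_self_eq_0 gtail_def List.finite_set)
  then show ?thesis
    unfolding h_ok_def using assms by (auto simp: cle_def Suc_le_eq card_gt_0_iff intro!: exI[of _ "{}"])
qed

lemma h0_bounds:
  assumes "finite (I1 \<inter> I2)" "\<not> reverse_admissible n I1 I2"
  shows "1 \<le> h0 n I1 I2" "h0 n I1 I2 \<le> card (I1 \<inter> I2)"
proof -
  have "h_ok n I1 I2 (h0 n I1 I2)"
    unfolding h0_def using h_ok_card_Int assms reverse_admissible_if_Int_empty by (metis LeastI)
  then show "1 \<le> h0 n I1 I2" "h0 n I1 I2 \<le> card (I1 \<inter> I2)" by (auto simp: h_ok_def)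
qed

lemma no_cle_gtail_before_h0:
  assumes "finite (I1 \<inter> I2)" "\<not> reverse_admissible n I1 I2"
  shows "\<not> (\<exists>T. T \<subseteq> compl_set n I1 I2 \<and> cle T (gtail I1 I2 (h0 n I1 I2 - 1)))"
proof (cases "h0 n I1 I2 = 1")
  case True
  then show ?thesis using assms by (simp add: gtail_0 reverse_admissible_def)
next
  case False
  then have "h0 n I1 I2 - 1 < h0 n I1 I2" using h0_bounds(1)[OF assms] by simp
  then have "\<not> h_ok n I1 I2 (h0 n I1 I2 - 1)" unfolding h0_def by (rule not_less_Least)
  then show ?thesis using False h0_bounds[OF assms] by (auto simp: h_ok_def)
qed

lemma h0_bottleneck:
  assumes "finite (I1 \<inter> I2)" "\<not> reverse_admissible n I1 I2"
  obtains j where "h0 n I1 I2 \<le> j" "j \<le> card (I1 \<inter> I2)"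
    and "card {c \<in> compl_set n I1 I2. c \<le> elt (I1 \<inter> I2) j} \<le> j - h0 n I1 I2"
proof -
  let ?h = "h0 n I1 I2" and ?B = "gtail I1 I2 (h0 n I1 I2 - 1)"
  have "finite ?B" by (simp add: gtail_def)
  then have "\<not> (\<forall>i<card ?B. i < card {c \<in> compl_set n I1 I2. c \<le> sorted_list_of_set ?B ! i})"
    using exists_subset_cle_if_counts[OF _ finite_compl_set] no_cle_gtail_before_h0[OF assms]
    by blast
  then obtain i where i: "i < card ?B"
    and count: "card {c \<in> compl_set n I1 I2. c \<le> sorted_list_of_set ?B ! i} \<le> i"
    by auto
  have h: "1 \<le> ?h" "?h \<le> card (I1 \<inter> I2)" using h0_bounds[OF assms] by auto
  have "sorted_list_of_set ?B ! i = elt (I1 \<inter> I2) (?h + i)"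
    using i h by (simp add: sorted_list_of_set_gtail card_gtail elt_def add.commute)
  then show ?thesis
    using that[of "?h + i"] i count h by (simp add: card_gtail)
qed

lemma bval_eq_h0_or_b_ok:
  "bval n I1 I2 T = h0 n I1 I2 \<or>
   h0 n I1 I2 < bval n I1 I2 T \<and> bval n I1 I2 T \<le> card (I1 \<inter> I2) \<and>
   b_ok n I1 I2 T (bval n I1 I2 T)"
proof (cases "\<exists>b\<in>{h0 n I1 I2 + 1..card (I1 \<inter> I2)}. b_ok n I1 I2 T b")
  case True
  let ?Q = "\<lambda>b. b \<in> {h0 n I1 I2 + 1..card (I1 \<inter> I2)} \<and> b_ok n I1 I2 T b"
  have "?Q (Greatest ?Q)" by (rule GreatestI_ex_nat[where b = "card (I1 \<inter> I2)"]) (use True in auto)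
  then show ?thesis using True by (simp add: bval_def)
qed (simp add: bval_def)

text \<open>Here b_ok at j + 1 would put the first j + 1 - h0 elements of T below gamma_j.\<close>

lemma bval_le_bottleneck:
  assumes T: "T \<subseteq> compl_set n I1 I2" "cle T (gtail I1 I2 (h0 n I1 I2))"
    and j: "h0 n I1 I2 \<le> j"
      "card {c \<in> compl_set n I1 I2. c \<le> elt (I1 \<inter> I2) j} \<le> j - h0 n I1 I2"
  shows "bval n I1 I2 T \<le> j"
proof (rule ccontr)
  let ?h = "h0 n I1 I2" and ?b = "bval n I1 I2 T" and ?y = "elt (I1 \<inter> I2) j"
  assume "\<not> ?b \<le> j"
  then have b: "j < ?b" "?b \<le> card (I1 \<inter> I2)" "b_ok n I1 I2 T ?b"
    using bval_eq_h0_or_b_ok[of n I1 I2 T] j(1) by auto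
  have "j + 1 \<in> {?h + 1..?b}" using j(1) b(1) by simp
  then have "elt T (j + 1 - ?h) \<le> elt (I1 \<inter> I2) (j + 1 - 1)"
    using b(3) unfolding b_ok_def by blast
  moreover have "finite T" "card T = card (I1 \<inter> I2) - ?h"
    using T(2) card_gtail by (auto simp: cle_def)
  ultimately have "j + 1 - ?h \<le> card {c \<in> T. c \<le> ?y}"
    using elt_le_iff[of T "j + 1 - ?h" ?y] j(1) b(1,2) by simp
  also have "\<dots> \<le> card {c \<in> compl_set n I1 I2. c \<le> ?y}"
    using T(1) finite_compl_set by (intro card_mono) auto
  finally show False using j by simp
qed

lemma le_card_below_compl_plus_card:
  fixes U :: "nat set"
  assumes "finite U" "y \<le> n"
  shows "y \<le> card {c \<in> {1..n} - U. c \<le> y} + card U"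
proof -
  have "{1..y} \<subseteq> {c \<in> {1..n} - U. c \<le> y} \<union> U" using assms(2) by auto
  then have "card {1..y} \<le> card ({c \<in> {1..n} - U. c \<le> y} \<union> U)"
    using assms(1) by (intro card_mono) auto
  also have "\<dots> \<le> card {c \<in> {1..n} - U. c \<le> y} + card U" by (rule card_Un_le)
  finally show ?thesis by simp
qed

lemma elt_Int_less_card_if_few_below:
  assumes "I1 \<subseteq> {1..n}" "I2 \<subseteq> {1..n}" "1 \<le> j" "j \<le> card (I1 \<inter> I2)"
    and few: "card {c \<in> compl_set n I1 I2. c \<le> elt (I1 \<inter> I2) j} < j"
  shows "elt (I1 \<inter> I2) j < card I1 + card I2"
proof -
  have fin: "finite I1" "finite I2" using assms(1,2) by (meson finite_atLeastAtMost finite_subset)+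
  have "elt (I1 \<inter> I2) j \<in> I1 \<inter> I2" using fin assms(3,4) by (intro elt_mem) auto
  then have "elt (I1 \<inter> I2) j \<le> card {c \<in> compl_set n I1 I2. c \<le> elt (I1 \<inter> I2) j} + card (I1 \<union> I2)"
    unfolding compl_set_def using assms(1) fin by (intro le_card_below_compl_plus_card) auto
  moreover have "card (I1 \<union> I2) + card (I1 \<inter> I2) = card I1 + card I2"
    using card_Un_Int[OF fin] by simp
  ultimately show ?thesis using few assms(4) by linarith
qed

lemma card_exchange:
  assumes "finite X" "finite G'" "F \<subseteq> G" "G \<subseteq> X" "G' \<inter> X = {}" "card G' = card (G - F)"
  shows "card ((X - G) \<union> F \<union> G') = card X"
proof -
  have fin: "finite G" "finite F" using assms(1,3,4) by (meson finite_subset)+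
  have "card ((X - G) \<union> F \<union> G') = card ((X - G) \<union> F) + card G'"
    using assms fin by (intro card_Un_disjoint) auto
  also have "card ((X - G) \<union> F) = card (X - G) + card F"
    using assms(1,3) fin by (intro card_Un_disjoint) auto
  also have "card G' = card G - card F"
    using assms(3,6) fin by (simp add: card_Diff_subset)
  also have "card (X - G) = card X - card G"
    using assms(4) fin by (simp add: card_Diff_subset)
  also have "card X - card G + card F + (card G - card F) = card X"
    using assms(1,3,4) fin card_mono[of X G] card_mono[of G F] by simp
  finally show ?thesis .
qed

lemma pbw_deg_exchange_ge:
  fixes I1 I2 F G' :: "nat set"
  assumes "finite I1" "finite I2" "finite G'"
    and "F \<subseteq> I1 \<inter> I2" "G' \<inter> (I1 \<union> I2) = {}" "card G' = card (I1 \<inter> I2 - F)"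
    and small: "\<forall>z \<in> I1 \<inter> I2 - F. z \<le> card I1 + card I2"
  shows "pbw_deg ((I2 - (I1 \<inter> I2)) \<union> F \<union> G') ((I1 - (I1 \<inter> I2)) \<union> F \<union> G')
         \<ge> pbw_deg I2 I1"
proof -
  let ?J1 = "(I1 - (I1 \<inter> I2)) \<union> F \<union> G'" and ?J2 = "(I2 - (I1 \<inter> I2)) \<union> F \<union> G'"
  have card: "card ?J1 = card I1" "card ?J2 = card I2"
    using assms by (intro card_exchange; auto)+
  have "finite ?J1" using assms(1,3,4) by (meson finite_Diff finite_UnI finite_subset le_infE)
  then have "finite {i \<in> ?J1. i > card I1 + card I2}" by (rule rev_finite_subset) blast
  moreover have "{i \<in> I1. i > card I1 + card I2} \<subseteq> {i \<in> ?J1. i > card I1 + card I2}"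
    using small by force
  ultimately have "card {i \<in> I1. i > card I1 + card I2} \<le> card {i \<in> ?J1. i > card I1 + card I2}"
    by (intro card_mono)
  then show ?thesis using card by (simp add: pbw_deg_def)
qed

theorem lemma4p20:
  fixes n k :: nat and I1 I2 T G' :: "nat set"
  assumes "1 \<le> n" and "1 \<le> k" and "k \<le> n"
    and "I1 \<subseteq> {1..n}" and "I2 \<subseteq> {1..n}" and "card I1 + card I2 = k"
    and "\<not> reverse_admissible n I1 I2"
    and "is_maxT n I1 I2 T"
    and "G' \<subseteq> {1..n} - (I1 \<union> I2)" and "card G' = card (tGamma n I1 I2 T)"
  shows "pbw_deg ((I2 - (I1 \<inter> I2)) \<union> Fset n I1 I2 T \<union> G')
                 ((I1 - (I1 \<inter> I2)) \<union> Fset n I1 I2 T \<union> G')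
         \<ge> pbw_deg I2 I1"
proof -
  have fin: "finite I1" "finite I2" "finite (I1 \<inter> I2)" "finite G'"
    using assms(4,5,9) by (meson Diff_subset finite_Int finite_atLeastAtMost finite_subset subset_trans)+
  obtain j where j: "h0 n I1 I2 \<le> j" "j \<le> card (I1 \<inter> I2)"
    and count: "card {c \<in> compl_set n I1 I2. c \<le> elt (I1 \<inter> I2) j} \<le> j - h0 n I1 I2"
    using h0_bottleneck[OF fin(3) assms(7)] .
  have h0: "1 \<le> h0 n I1 I2" using h0_bounds[OF fin(3) assms(7)] by simp
  have "bval n I1 I2 T \<le> j"
    using assms(8) j(1) count by (intro bval_le_bottleneck) (auto simp: is_maxT_def)
  then have tGamma: "tGamma n I1 I2 T \<subseteq> {z \<in> I1 \<inter> I2. z \<le> elt (I1 \<inter> I2) j}"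
    unfolding tGamma_def using fin(3) h0 j(2) by (intro elt_image_subset)
  have "elt (I1 \<inter> I2) j < card I1 + card I2"
    using assms(4,5) h0 j count by (intro elt_Int_less_card_if_few_below) auto
  moreover have "I1 \<inter> I2 - Fset n I1 I2 T = tGamma n I1 I2 T"
    using tGamma by (auto simp: Fset_def)
  ultimately show ?thesis
    using assms(9,10) fin tGamma by (intro pbw_deg_exchange_ge) (auto simp: Fset_def)
qed

end
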